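(* Let $\mathfrak{A}$ be a $\sigma$-algebra represented as $\mathfrak{A}=\mathfrak{A}(M)/\mathcal{I}$, with $\mathfrak{A}(M)$ a $\sigma$-algebra of subsets of a nonempty set $M$ and $\mathcal{I}$ a $\sigma$-ideal in $\mathfrak{A}(M)$. Up to the canonical homeomorphism between $\mathcal{Q}(\mathfrak{A})$ and the Gelfand spectrum of the abelian $C^\ast$-algebra $\mathcal{F}_{\mathfrak{A}(M)}(M,\mathbb{C})/\mathcal{F}(\mathcal{I})$, the Gelfand transformation of $\mathcal{F}_{\mathfrak{A}(M)}(M,\mathbb{C})/\mathcal{F}(\mathcal{I})$ restricted to its selfadjoint part $\mathcal{F}_{\mathfrak{A}(M)}(M,\mathbb{R})/\mathcal{F}_{\mathbb{R}}(\mathcal{I})$ is the map \[ \Gamma:\mathcal{F}_{\mathfrak{A}(M)}(M,\mathbb{R})/\mathcal{F}_{\mathbb{R}}(\mathcal{I})\to C(\mathcal{Q}(\mathfrak{A}),\mathbb{R}),\qquad [\varphi]\mapsto f_{E^{[\varphi]}}. \] Moreover, if $\mathcal{Q}(\mathfrak{A})$ is identified with $\mathcal{Q}^{\mathcal{I}}(\mathfrak{A}(M))$, then $f_{E^{[\varphi]}}=f_{E^\varphi}|_{\mathcal{Q}^{\mathcal{I}}(\mathfrak{A}(M))}$, where $\varphi\mapsto f_{E^\varphi}$ is the Gelfand transformation on $\mathcal{F}_{\mathfrak{A}(M)}(M,\mathbb{R})$ (via $\mathcal{Q}(\mathfrak{A}(M))\cong\Omega(\mathcal{F}_{\mathfr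ak{A}(M)}(M,\mathbb{C}))$).
   Context: $\mathcal{F}_{\mathfrak{A}(M)}(M,\mathbb{C})$ is the $C^\ast$-algebra of bounded $\mathfrak{A}(M)$-measurable functions $M\to\mathbb{C}$ (sup norm), $\mathcal{F}_{\mathfrak{A}(M)}(M,\mathbb{R})$ its real-valued elements, $\mathcal{F}(\mathcal{I})$ the closed ideal of those functions vanishing outside some $A\in\mathcal{I}$, and $\mathcal{F}_{\mathbb{R}}(\mathcal{I})=\mathcal{F}_{\mathfrak{A}(M)}(M,\mathbb{R})\cap\mathcal{F}(\mathcal{I})$. For a $\sigma$-complete lattice $\mathbb{L}$ (with $0,1$), a spectral family is a map $E:\mathbb{R}\to\mathbb{L}$ with $E_\lambda\le E_\mu$ ($\lambda\le\mu$), $E_\lambda=\bigwedge_{\mu>\lambda}E_\mu$, $\bigwedge_\lambda E_\lambda=0$, $\bigvee_\lambda E_\lambda=1$; quasipoints are maximal dual ideals (maximal nonempty upward closed subsets not containing $0$ and closed under finite meets); the Stone spectrum $\mathcal{Q}(\mathbb{L})$ is the set of quasipoints with the topology generated by $\{\mathfrak{B}\mid a\in\mathfrak{B}\}$, $a\in\mathbb{L}$; for a bounded spectral family $E$, $f_E(\mathfrak{B}):=\inf\{\lambda\mid E_\lambda\in\mathfrak{B}\}$. For $\varphi\in\mathcal{F}_{\mathfrak{A}(M)}(M,\mathbb{R})$, $E^\varphi_\lambda:=\varphi^{-1}(]-\infty,\lambda])$ and $E^{[\varphi]}_\lambda:=[E^\varphi_\lambda]\in\mathfrak{A}$ (class modulo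 $\mathcal{I}$); $E^{[\varphi]}$ depends only on $[\varphi]$ and is a spectral family in $\mathfrak{A}$. With $\mathcal{I}^\perp=\{M\setminus A\mid A\in\mathcal{I}\}$, $\mathcal{Q}^{\mathcal{I}}(\mathfrak{A}(M)):=\{\mathfrak{B}\in\mathcal{Q}(\mathfrak{A}(M))\mid\mathcal{I}^\perp\subseteq\mathfrak{B}\}$, identified with $\mathcal{Q}(\mathfrak{A})$ via $\mathfrak{B}\mapsto\{[A]\mid A\in\mathfrak{B}\}$ (so that $[A]$ lies in the image iff any representative $A$ lies in $\mathfrak{B}$). It is known that $\mathcal{Q}(\mathfrak{A})$ is canonically homeomorphic to the Gelfand spectrum of $\mathcal{F}_{\mathfrak{A}(M)}(M,\mathbb{C})/\mathcal{F}(\mathcal{I})$. *)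

theory Defs
  imports "HOL-Analysis.Analysis"
begin

text \<open>A lattice is given by a carrier L, an order le, a binary meet and a bottom element.\<close>

definition dual_ideal ::
  "'b set \<Rightarrow> ('b \<Rightarrow> 'b \<Rightarrow> bool) \<Rightarrow> ('b \<Rightarrow> 'b \<Rightarrow> 'b) \<Rightarrow> 'b \<Rightarrow> 'b set \<Rightarrow> bool" where
  "dual_ideal L le meet z0 D \<longleftrightarrow>
     D \<subseteq> L \<and> D \<noteq> {} \<and> z0 \<notin> D \<and>
     (\<forall>a\<in>D. \<forall>b\<in>L. le a b \<longrightarrow> b \<in> D) \<and>
     (\<forall>a\<in>D. \<forall>b\<in>D. meet a b \<in> D)"

definition quasipoint ::
  "'b set \<Rightarrow> ('b \<Rightarrow> 'b \<Rightarrow> bool) \<Rightarrow> ('b \<Rightarrow> 'b \<Rightarrow> 'b) \<Rightarrow> 'b \<Rightarrow> 'b set \<Rightarrow> bool" where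
  "quasipoint L le meet z0 D \<longleftrightarrow>
     dual_ideal L le meet z0 D \<and>
     (\<forall>D'. dual_ideal L le meet z0 D' \<and> D \<subseteq> D' \<longrightarrow> D' = D)"

definition stone_spectrum ::
  "'b set \<Rightarrow> ('b \<Rightarrow> 'b \<Rightarrow> bool) \<Rightarrow> ('b \<Rightarrow> 'b \<Rightarrow> 'b) \<Rightarrow> 'b \<Rightarrow> 'b set topology" where
  "stone_spectrum L le meet z0 =
     topology_generated_by
       ((\<lambda>a. {B. quasipoint L le meet z0 B \<and> a \<in> B}) ` L)"

definition obs_fun :: "(real \<Rightarrow> 'b) \<Rightarrow> 'b set \<Rightarrow> real" where
  "obs_fun E B = Inf {t. E t \<in> B}"

section \<open>The sigma-algebra setting (M is the universe of type 'a)\<close>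

definition sigma_ideal :: "'a set set \<Rightarrow> 'a set set \<Rightarrow> bool" where
  "sigma_ideal S I \<longleftrightarrow>
     I \<subseteq> S \<and> {} \<in> I \<and>
     (\<forall>A\<in>I. \<forall>B\<in>S. B \<subseteq> A \<longrightarrow> B \<in> I) \<and>
     (\<forall>F::nat \<Rightarrow> 'a set. range F \<subseteq> I \<longrightarrow> (\<Union>n. F n) \<in> I)"

definition cls :: "'a set set \<Rightarrow> 'a set set \<Rightarrow> 'a set \<Rightarrow> 'a set set" where
  "cls S I A = {B\<in>S. (A - B) \<union> (B - A) \<in> I}"

definition qcarrier :: "'a set set \<Rightarrow> 'a set set \<Rightarrow> 'a set set set" where
  "qcarrier S I = cls S I ` S"

definition qle :: "'a set set \<Rightarrow> 'a set set \<Rightarrow> 'a set set \<Rightarrow> bool" where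
  "qle I X Y \<longleftrightarrow> (\<exists>A\<in>X. \<exists>B\<in>Y. A - B \<in> I)"

definition qmeet :: "'a set set \<Rightarrow> 'a set set \<Rightarrow> 'a set set \<Rightarrow> 'a set set \<Rightarrow> 'a set set" where
  "qmeet S I X Y = cls S I ((SOME A. A \<in> X) \<inter> (SOME B. B \<in> Y))"

definition qbot :: "'a set set \<Rightarrow> 'a set set \<Rightarrow> 'a set set" where
  "qbot S I = cls S I {}"

abbreviation quasipoint_quot :: "'a set set \<Rightarrow> 'a set set \<Rightarrow> 'a set set set \<Rightarrow> bool" where
  "quasipoint_quot S I B \<equiv> quasipoint (qcarrier S I) (qle I) (qmeet S I) (qbot S I) B"

abbreviation stone_quot :: "'a set set \<Rightarrow> 'a set set \<Rightarrow> 'a set set set topology" where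
  "stone_quot S I \<equiv> stone_spectrum (qcarrier S I) (qle I) (qmeet S I) (qbot S I)"

abbreviation quasipoint_set :: "'a set set \<Rightarrow> 'a set set \<Rightarrow> bool" where
  "quasipoint_set S B \<equiv> quasipoint S (\<subseteq>) (\<inter>) {} B"

definition spec_fam :: "('a \<Rightarrow> real) \<Rightarrow> real \<Rightarrow> 'a set" where
  "spec_fam \<phi> t = {x. \<phi> x \<le> t}"

definition spec_fam_quot :: "'a set set \<Rightarrow> 'a set set \<Rightarrow> ('a \<Rightarrow> real) \<Rightarrow> real \<Rightarrow> 'a set set" where
  "spec_fam_quot S I \<phi> t = cls S I (spec_fam \<phi> t)"

definition measurable_wrt :: "'a set set \<Rightarrow> ('a \<Rightarrow> 'c::topological_space) \<Rightarrow> bool" where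
  "measurable_wrt S f \<longleftrightarrow> (\<forall>U. open U \<longrightarrow> f -` U \<in> S)"

definition Fmeas :: "'a set set \<Rightarrow> ('a \<Rightarrow> 'c::real_normed_vector) set" where
  "Fmeas S = {f. measurable_wrt S f \<and> bounded (range f)}"

definition Fideal :: "'a set set \<Rightarrow> 'a set set \<Rightarrow> ('a \<Rightarrow> 'c::real_normed_vector) set" where
  "Fideal S I = {f\<in>Fmeas S. \<exists>A\<in>I. \<forall>x. x \<notin> A \<longrightarrow> f x = 0}"

definition fcls :: "'a set set \<Rightarrow> 'a set set \<Rightarrow> ('a \<Rightarrow> complex) \<Rightarrow> ('a \<Rightarrow> complex) set" where
  "fcls S I f = {g\<in>Fmeas S. (\<lambda>x. g x - f x) \<in> Fideal S I}"

text \<open>Gelfand spectrum of the quotient algebra: nonzero multiplicative linear functionals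
  on F_{A(M)}(M,C)/F(I) (operations computed on representatives).\<close>
definition quot_character ::
  "'a set set \<Rightarrow> 'a set set \<Rightarrow> (('a \<Rightarrow> complex) set \<Rightarrow> complex) \<Rightarrow> bool" where
  "quot_character S I ch \<longleftrightarrow>
     (\<forall>f\<in>Fmeas S. \<forall>g\<in>Fmeas S.
        ch (fcls S I (\<lambda>x. f x + g x)) = ch (fcls S I f) + ch (fcls S I g) \<and>
        ch (fcls S I (\<lambda>x. f x * g x)) = ch (fcls S I f) * ch (fcls S I g)) \<and>
     (\<forall>f\<in>Fmeas S. \<forall>c::complex. ch (fcls S I (\<lambda>x. c * f x)) = c * ch (fcls S I f)) \<and>
     (\<exists>f\<in>Fmeas S. ch (fcls S I f) \<noteq> 0)"

end

theory Submission
  imports Defs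
begin

text \<open>
  A quasipoint B of A(M)/I is an ultrafilter of classes, so the representatives of its
  members generate a proper filter on M. Along this filter every bounded measurable \<open>\<phi>\<close>
  converges to the value at B of the observable function of the class of \<open>\<phi>\<close>: above that
  value the classes \<open>[\<phi> \<le> t]\<close> lie in B, below it their complements do. Taking limits along the filter
  is therefore a character sending the class of an indicator \<open>\<chi>\<^sub>A\<close> to 1 or 0 according to
  whether \<open>[A] \<in> B\<close>. Any character \<open>\<chi>\<close> with these values agrees with it: otherwise
  \<open>\<phi> - \<chi>([\<phi>])\<close> is bounded away from zero on a set whose class is in B, which yields an
  invertible element annihilated by \<open>\<chi>\<close>. The same threshold description exhibits
  \<open>{f < a}\<close> and \<open>{f > a}\<close> as unions of basic open sets of the Stone spectrum.
  Finally, a quasipoint of A(M) containing the complements of all null sets contains a set as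
  soon as it contains a set equivalent to it, so both spectral families give the same
  observable function there.
\<close>

lemma quot_character_add:
  "\<lbrakk>quot_character S I ch; f \<in> Fmeas S; g \<in> Fmeas S\<rbrakk>
    \<Longrightarrow> ch (fcls S I (\<lambda>x. f x + g x)) = ch (fcls S I f) + ch (fcls S I g)"
  unfolding quot_character_def by blast

lemma quot_character_mult:
  "\<lbrakk>quot_character S I ch; f \<in> Fmeas S; g \<in> Fmeas S\<rbrakk>
    \<Longrightarrow> ch (fcls S I (\<lambda>x. f x * g x)) = ch (fcls S I f) * ch (fcls S I g)"
  unfolding quot_character_def by blast

lemma quot_character_scale:
  "\<lbrakk>quot_character S I ch; f \<in> Fmeas S\<rbrakk> \<Longrightarrow> ch (fcls S I (\<lambda>x. c * f x)) = c * ch (fcls S I f)"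
  unfolding quot_character_def by blast

locale univ_sigma_algebra = sigma_algebra "UNIV :: 'a set" S for S :: "'a set set"
begin

lemma sets_sigma_UNIV [simp]: "sets (sigma UNIV S) = S"
  by (rule sets_measure_of_eq)

lemma Compl_sets [intro]: "A \<in> S \<Longrightarrow> - A \<in> S"
  using compl_sets by (simp add: Compl_eq_Diff_UNIV)

lemma Fmeas_iff:
  "f \<in> Fmeas S \<longleftrightarrow> f \<in> borel_measurable (sigma UNIV S) \<and> (\<exists>K. \<forall>x. norm (f x) \<le> K)"
proof -
  have "measurable_wrt S f \<longleftrightarrow> f \<in> borel_measurable (sigma UNIV S)"
    unfolding measurable_wrt_def
    by (metis borel_measurableI borel_open measurable_sets sets_sigma_UNIV space_measure_of_conv
        inf_top.right_neutral)
  then show ?thesis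
    unfolding Fmeas_def bounded_iff by auto
qed

lemma FmeasI:
  "f \<in> borel_measurable (sigma UNIV S) \<Longrightarrow> (\<And>x. norm (f x) \<le> K) \<Longrightarrow> f \<in> Fmeas S"
  unfolding Fmeas_iff by blast

lemma Fmeas_measurable [measurable_dest]: "f \<in> Fmeas S \<Longrightarrow> f \<in> borel_measurable (sigma UNIV S)"
  unfolding Fmeas_iff by blast

lemma Fmeas_boundE:
  assumes "f \<in> Fmeas S"
  obtains K where "K > 0" "\<And>x. norm (f x) \<le> K"
proof -
  obtain K where "\<And>x. norm (f x) \<le> K"
    using assms unfolding Fmeas_iff by blast
  then have "\<And>x. norm (f x) \<le> max K 1"
    by (meson max.coboundedI1)
  then show thesis
    by (rule that[of "max K 1", rotated]) simp
qed

lemma Fmeas_const: "(\<lambda>x. c) \<in> Fmeas S"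
  by (rule FmeasI[where K = "norm c"]) auto

lemma Fmeas_add:
  fixes f g :: "'a \<Rightarrow> complex"
  assumes f: "f \<in> Fmeas S" and g: "g \<in> Fmeas S"
  shows "(\<lambda>x. f x + g x) \<in> Fmeas S"
proof -
  obtain K L where "\<And>x. norm (f x) \<le> K" "\<And>x. norm (g x) \<le> L"
    using Fmeas_boundE f g by metis
  then show ?thesis
  proof (intro FmeasI[where K = "K + L"])
    show "(\<lambda>x. f x + g x) \<in> borel_measurable (sigma UNIV S)"
      by (rule borel_measurable_add[OF Fmeas_measurable[OF f] Fmeas_measurable[OF g]])
  qed (auto intro: norm_triangle_le add_mono)
qed

lemma Fmeas_mult:
  fixes f g :: "'a \<Rightarrow> complex"
  assumes f: "f \<in> Fmeas S" and g: "g \<in> Fmeas S"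
  shows "(\<lambda>x. f x * g x) \<in> Fmeas S"
proof -
  obtain K L where "\<And>x. norm (f x) \<le> K" "\<And>x. norm (g x) \<le> L"
    using Fmeas_boundE f g by metis
  then show ?thesis
  proof (intro FmeasI[where K = "K * L"])
    show "(\<lambda>x. f x * g x) \<in> borel_measurable (sigma UNIV S)"
      by (rule borel_measurable_times[OF Fmeas_measurable[OF f] Fmeas_measurable[OF g]])
  qed (auto simp: norm_mult intro: mult_mono')
qed

lemma Fmeas_of_real:
  "\<phi> \<in> Fmeas S \<Longrightarrow> (\<lambda>x. complex_of_real (\<phi> x)) \<in> Fmeas S"
  unfolding Fmeas_iff by auto

lemma Fmeas_Re: "f \<in> Fmeas S \<Longrightarrow> (\<lambda>x. Re (f x)) \<in> Fmeas S"
  unfolding Fmeas_iff by (auto intro: order_trans[OF abs_Re_le_cmod])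

lemma Fmeas_Im: "f \<in> Fmeas S \<Longrightarrow> (\<lambda>x. Im (f x)) \<in> Fmeas S"
  unfolding Fmeas_iff by (auto intro: order_trans[OF abs_Im_le_cmod])

lemma Fmeas_indicator:
  assumes "A \<in> S"
  shows "(\<lambda>x. complex_of_real (indicator A x)) \<in> Fmeas S"
proof (rule FmeasI[where K = 1])
  have [measurable]: "A \<in> sets (sigma UNIV S)"
    using assms by simp
  show "(\<lambda>x. complex_of_real (indicator A x)) \<in> borel_measurable (sigma UNIV S)"
    by measurable
qed (auto simp: indicator_def)

lemma Fmeas_inverse:
  fixes h :: "'a \<Rightarrow> complex"
  assumes h: "h \<in> Fmeas S" and "e > 0" and bounded_below: "\<And>x. e \<le> norm (h x)"
  shows "(\<lambda>x. inverse (h x)) \<in> Fmeas S"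
proof (rule FmeasI[where K = "inverse e"])
  show "(\<lambda>x. inverse (h x)) \<in> borel_measurable (sigma UNIV S)"
    using h by measurable
  show "norm (inverse (h x)) \<le> inverse e" for x
    using bounded_below[of x] \<open>e > 0\<close> by (simp add: norm_inverse le_imp_inverse_le)
qed

lemma spec_fam_sets: "\<phi> \<in> Fmeas S \<Longrightarrow> spec_fam \<phi> t \<in> S"
  using measurable_sets[OF Fmeas_measurable, of \<phi> "{..t}"]
  by (simp add: spec_fam_def vimage_def space_measure_of_conv)

lemma quot_character_one:
  assumes "quot_character S I ch"
  shows "ch (fcls S I (\<lambda>x. 1)) = 1"
proof -
  obtain f where "f \<in> Fmeas S" "ch (fcls S I f) \<noteq> 0"
    using assms unfolding quot_character_def by blast
  moreover have "ch (fcls S I (\<lambda>x. 1 * f x)) = ch (fcls S I (\<lambda>x. 1)) * ch (fcls S I f)"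
    using quot_character_mult[OF assms Fmeas_const \<open>f \<in> Fmeas S\<close>] .
  ultimately show ?thesis
    by simp
qed

lemma quot_character_nonzero:
  assumes ch: "quot_character S I ch" and h: "h \<in> Fmeas S"
    and "e > 0" and bounded_below: "\<And>x. e \<le> norm (h x)"
  shows "ch (fcls S I h) \<noteq> 0"
proof
  assume "ch (fcls S I h) = 0"
  have "h x \<noteq> 0" for x
    using bounded_below[of x] \<open>e > 0\<close> by auto
  then have "(\<lambda>x. h x * inverse (h x)) = (\<lambda>x. 1)"
    by simp
  moreover have "(\<lambda>x. inverse (h x)) \<in> Fmeas S"
    using h \<open>e > 0\<close> bounded_below by (rule Fmeas_inverse)
  ultimately have "ch (fcls S I (\<lambda>x. 1)) = ch (fcls S I h) * ch (fcls S I (\<lambda>x. inverse (h x)))"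
    using quot_character_mult[OF ch h] by metis
  then show False
    using \<open>ch (fcls S I h) = 0\<close> quot_character_one[OF ch] by simp
qed

end

locale quotient_algebra = univ_sigma_algebra S for S :: "'a set set" +
  fixes I :: "'a set set"
  assumes ideal_sets: "I \<subseteq> S"
    and empty_ideal: "{} \<in> I"
    and ideal_subset: "\<lbrakk>A \<in> I; C \<in> S; C \<subseteq> A\<rbrakk> \<Longrightarrow> C \<in> I"
    and ideal_Un: "\<lbrakk>A \<in> I; C \<in> I\<rbrakk> \<Longrightarrow> A \<union> C \<in> I"

lemma quotient_algebra_if_sigma_ideal:
  assumes "sigma_algebra UNIV S" and "sigma_ideal S I"
  shows "quotient_algebra S I"
proof -
  have "A \<union> C \<in> I" if "A \<in> I" "C \<in> I" for A C
  proof -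
    have "range (binary A C) \<subseteq> I"
      using that by (simp add: range_binary_eq)
    then show ?thesis
      using assms(2) unfolding sigma_ideal_def Un_range_binary by blast
  qed
  with assms show ?thesis
    by (intro quotient_algebra.intro quotient_algebra_axioms.intro univ_sigma_algebra.intro)
      (auto simp: sigma_ideal_def)
qed

context quotient_algebra
begin

lemma ideal_subset_Un: "\<lbrakk>A \<in> I; A' \<in> I; C \<in> S; C \<subseteq> A \<union> A'\<rbrakk> \<Longrightarrow> C \<in> I"
  using ideal_subset ideal_Un by blast

lemma mem_cls_iff: "C \<in> cls S I A \<longleftrightarrow> C \<in> S \<and> sym_diff A C \<in> I"
  unfolding cls_def by simp

lemma cls_self: "A \<in> S \<Longrightarrow> A \<in> cls S I A"
  unfolding cls_def by (simp add: empty_ideal)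

lemma cls_eq_iff:
  assumes "A \<in> S" "C \<in> S"
  shows "cls S I A = cls S I C \<longleftrightarrow> sym_diff A C \<in> I"
proof
  assume "cls S I A = cls S I C"
  then have "C \<in> cls S I A"
    using cls_self[OF assms(2)] by simp
  then show "sym_diff A C \<in> I"
    by (simp add: mem_cls_iff)
next
  assume AC: "sym_diff A C \<in> I"
  have "sym_diff A D \<in> I \<longleftrightarrow> sym_diff C D \<in> I" if "D \<in> S" for D
  proof
    show "sym_diff C D \<in> I" if "sym_diff A D \<in> I"
      by (rule ideal_subset_Un[OF AC that]) (use assms \<open>D \<in> S\<close> in auto)
    show "sym_diff A D \<in> I" if "sym_diff C D \<in> I"
      by (rule ideal_subset_Un[OF AC that]) (use assms \<open>D \<in> S\<close> in auto)
  qed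
  then show "cls S I A = cls S I C"
    unfolding cls_def by blast
qed

lemma cls_eq_qbot_iff: "A \<in> S \<Longrightarrow> cls S I A = qbot S I \<longleftrightarrow> A \<in> I"
  unfolding qbot_def by (subst cls_eq_iff) auto

lemma mem_qcarrier_iff: "X \<in> qcarrier S I \<longleftrightarrow> (\<exists>A\<in>S. X = cls S I A)"
  unfolding qcarrier_def by auto

lemma qmeet_cls:
  assumes "A \<in> S" "C \<in> S"
  shows "qmeet S I (cls S I A) (cls S I C) = cls S I (A \<inter> C)"
proof -
  define A' where "A' = (SOME A'. A' \<in> cls S I A)"
  define C' where "C' = (SOME C'. C' \<in> cls S I C)"
  have "A' \<in> cls S I A" "C' \<in> cls S I C"
    unfolding A'_def C'_def using assms by (auto intro: someI cls_self)
  then have "A' \<in> S" "C' \<in> S" and ideal: "sym_diff A A' \<in> I" "sym_diff C C' \<in> I"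
    by (auto simp: mem_cls_iff)
  have "sym_diff (A' \<inter> C') (A \<inter> C) \<in> I"
    by (rule ideal_subset_Un[OF ideal]) (use assms \<open>A' \<in> S\<close> \<open>C' \<in> S\<close> in auto)
  then have "cls S I (A' \<inter> C') = cls S I (A \<inter> C)"
    using \<open>A' \<in> S\<close> \<open>C' \<in> S\<close> assms by (subst cls_eq_iff) auto
  then show ?thesis
    unfolding qmeet_def A'_def C'_def .
qed

lemma qle_cls:
  assumes "A \<in> S" "C \<in> S"
  shows "qle I (cls S I A) (cls S I C) \<longleftrightarrow> A - C \<in> I"
proof
  assume "qle I (cls S I A) (cls S I C)"
  then obtain A' C' where "A' \<in> cls S I A" "C' \<in> cls S I C" and "A' - C' \<in> I"
    unfolding qle_def by blast
  then have "A' \<in> S" "C' \<in> S" and "sym_diff A A' \<union> sym_diff C C' \<in> I"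
    by (auto simp: mem_cls_iff ideal_Un)
  from this(3) \<open>A' - C' \<in> I\<close> show "A - C \<in> I"
    by (rule ideal_subset_Un) (use assms \<open>A' \<in> S\<close> \<open>C' \<in> S\<close> in auto)
next
  assume "A - C \<in> I"
  then show "qle I (cls S I A) (cls S I C)"
    unfolding qle_def using assms cls_self by blast
qed

lemma fcls_self: "f \<in> Fmeas S \<Longrightarrow> f \<in> fcls S I f"
  unfolding fcls_def Fideal_def using Fmeas_const[of 0] empty_ideal by auto

end

locale quotient_dual_ideal = quotient_algebra +
  fixes B :: "'a set set set"
  assumes dual_ideal: "dual_ideal (qcarrier S I) (qle I) (qmeet S I) (qbot S I) B"
begin

lemma mem_imp_cls: "X \<in> B \<Longrightarrow> \<exists>A\<in>S. X = cls S I A"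
  using dual_ideal unfolding dual_ideal_def mem_qcarrier_iff[symmetric] by auto

lemma qbot_not_mem: "qbot S I \<notin> B"
  using dual_ideal unfolding dual_ideal_def by auto

lemma qle_mem: "\<lbrakk>X \<in> B; Y \<in> qcarrier S I; qle I X Y\<rbrakk> \<Longrightarrow> Y \<in> B"
  using dual_ideal unfolding dual_ideal_def by auto

lemma qmeet_mem: "\<lbrakk>X \<in> B; Y \<in> B\<rbrakk> \<Longrightarrow> qmeet S I X Y \<in> B"
  using dual_ideal unfolding dual_ideal_def by auto

lemma cls_mem_mono:
  assumes "cls S I A \<in> B" "A \<in> S" "C \<in> S" "A - C \<in> I"
  shows "cls S I C \<in> B"
proof -
  have "qle I (cls S I A) (cls S I C)" "cls S I C \<in> qcarrier S I"
    using assms by (auto simp: qle_cls mem_qcarrier_iff)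
  then show ?thesis
    using assms(1) by (rule_tac qle_mem) auto
qed

lemma cls_mem_subset:
  assumes "cls S I A \<in> B" "A \<in> S" "C \<in> S" "A \<subseteq> C"
  shows "cls S I C \<in> B"
proof -
  have "A - C \<in> I"
    using assms(4) empty_ideal by (simp add: Diff_eq_empty_iff[THEN iffD2])
  with assms(1-3) show ?thesis
    by (rule cls_mem_mono)
qed

lemma cls_Int_mem:
  assumes "cls S I A \<in> B" "cls S I C \<in> B" "A \<in> S" "C \<in> S"
  shows "cls S I (A \<inter> C) \<in> B"
proof -
  have "qmeet S I (cls S I A) (cls S I C) \<in> B"
    using assms(1,2) by (rule qmeet_mem)
  then show ?thesis
    by (simp only: qmeet_cls[OF assms(3,4)])
qed

lemma cls_UNIV_mem: "cls S I UNIV \<in> B"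
proof -
  obtain X where "X \<in> B"
    using dual_ideal unfolding dual_ideal_def by auto
  then obtain A where "cls S I A \<in> B" "A \<in> S"
    using mem_imp_cls by blast
  then show ?thesis
    by (rule cls_mem_subset) simp_all
qed

lemma cls_ideal_not_mem:
  assumes "A \<in> I"
  shows "cls S I A \<notin> B"
proof -
  have "cls S I A = qbot S I"
    using assms ideal_sets by (subst cls_eq_qbot_iff) auto
  then show ?thesis
    using qbot_not_mem by simp
qed

lemma cls_mem_nonempty: "cls S I A \<in> B \<Longrightarrow> A \<noteq> {}"
  using cls_ideal_not_mem empty_ideal by blast

text \<open>The dual ideal generated by B and the class of A.\<close>
definition adjoin :: "'a set \<Rightarrow> 'a set set set" where
  "adjoin A = {cls S I C | C. C \<in> S \<and> (\<exists>D\<in>S. cls S I D \<in> B \<and> D \<inter> A - C \<in> I)}"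

lemma subset_adjoin: "B \<subseteq> adjoin A"
proof
  fix X
  assume "X \<in> B"
  then obtain C where "C \<in> S" "X = cls S I C"
    using mem_imp_cls by blast
  moreover have "C \<inter> A - C \<in> I"
    using empty_ideal by (simp add: Diff_eq)
  ultimately show "X \<in> adjoin A"
    unfolding adjoin_def using \<open>X \<in> B\<close> by blast
qed

lemma cls_mem_adjoin: "A \<in> S \<Longrightarrow> cls S I A \<in> adjoin A"
  unfolding adjoin_def using cls_UNIV_mem empty_ideal by (intro CollectI exI[of _ A]) auto

lemma dual_ideal_adjoin:
  assumes "A \<in> S" and meets_A: "\<And>D. D \<in> S \<Longrightarrow> cls S I D \<in> B \<Longrightarrow> D \<inter> A \<notin> I"
  shows "dual_ideal (qcarrier S I) (qle I) (qmeet S I) (qbot S I) (adjoin A)"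
  unfolding dual_ideal_def
proof (intro conjI ballI impI)
  show "adjoin A \<subseteq> qcarrier S I"
    by (auto simp: adjoin_def mem_qcarrier_iff)
  show "adjoin A \<noteq> {}"
    using subset_adjoin cls_UNIV_mem by blast
  show "qbot S I \<notin> adjoin A"
  proof
    assume "qbot S I \<in> adjoin A"
    then obtain C D where "qbot S I = cls S I C" "C \<in> S"
      and D: "D \<in> S" "cls S I D \<in> B" "D \<inter> A - C \<in> I"
      unfolding adjoin_def by blast
    then have "C \<in> I"
      by (metis cls_eq_qbot_iff)
    with D(3) have "D \<inter> A \<in> I"
      by (rule ideal_subset_Un) (use \<open>A \<in> S\<close> D in auto)
    then show False
      using meets_A D by simp
  qed
next
  fix X Y
  assume "X \<in> adjoin A" "Y \<in> qcarrier S I" "qle I X Y"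
  then obtain C C' D where "C \<in> S" "C' \<in> S" "X = cls S I C" "Y = cls S I C'" "C - C' \<in> I"
    and D: "D \<in> S" "cls S I D \<in> B" "D \<inter> A - C \<in> I"
    by (auto simp: adjoin_def mem_qcarrier_iff qle_cls)
  moreover from D(3) \<open>C - C' \<in> I\<close> have "D \<inter> A - C' \<in> I"
    by (rule ideal_subset_Un) (use \<open>A \<in> S\<close> D \<open>C' \<in> S\<close> in auto)
  ultimately show "Y \<in> adjoin A"
    unfolding adjoin_def by blast
next
  fix X Y
  assume "X \<in> adjoin A" "Y \<in> adjoin A"
  then obtain C1 C2 D1 D2 where C: "C1 \<in> S" "C2 \<in> S" "X = cls S I C1" "Y = cls S I C2"
    and D: "D1 \<in> S" "D2 \<in> S" "cls S I D1 \<in> B" "cls S I D2 \<in> B"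
      "D1 \<inter> A - C1 \<in> I" "D2 \<inter> A - C2 \<in> I"
    unfolding adjoin_def by blast
  from D(5,6) have "(D1 \<inter> D2) \<inter> A - (C1 \<inter> C2) \<in> I"
    by (rule ideal_subset_Un) (use \<open>A \<in> S\<close> C D in auto)
  moreover have "cls S I (D1 \<inter> D2) \<in> B"
    using cls_Int_mem D by blast
  ultimately show "qmeet S I X Y \<in> adjoin A"
    unfolding adjoin_def using C D qmeet_cls by blast
qed

text \<open>Limits along this filter realise the Gelfand transform at B.\<close>
definition rep_filter :: "'a filter" where
  "rep_filter = (INF A\<in>{A \<in> S. cls S I A \<in> B}. principal A)"

lemma eventually_rep_filter:
  "eventually P rep_filter \<longleftrightarrow> (\<exists>A\<in>S. cls S I A \<in> B \<and> (\<forall>x\<in>A. P x))"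
proof -
  have "eventually P rep_filter \<longleftrightarrow> (\<exists>A\<in>{A \<in> S. cls S I A \<in> B}. eventually P (principal A))"
    unfolding rep_filter_def
  proof (rule eventually_INF_base)
    show "{A \<in> S. cls S I A \<in> B} \<noteq> {}"
      using cls_UNIV_mem by blast
  next
    fix A C
    assume "A \<in> {A \<in> S. cls S I A \<in> B}" "C \<in> {A \<in> S. cls S I A \<in> B}"
    then have "A \<inter> C \<in> {A \<in> S. cls S I A \<in> B}"
      using cls_Int_mem by auto
    then show "\<exists>D\<in>{A \<in> S. cls S I A \<in> B}. principal D \<le> inf (principal A) (principal C)"
      by auto
  qed
  then show ?thesis
    by (auto simp: eventually_principal)
qed

lemma eventually_mem_rep_filter_iff:
  assumes "A \<in> S"
  shows "eventually (\<lambda>x. x \<in> A) rep_filter \<longleftrightarrow> cls S I A \<in> B"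
proof
  assume "eventually (\<lambda>x. x \<in> A) rep_filter"
  then obtain C where "cls S I C \<in> B" "C \<in> S" "C \<subseteq> A"
    unfolding eventually_rep_filter by blast
  then show "cls S I A \<in> B"
    using assms by (rule_tac cls_mem_subset) auto
qed (use assms in \<open>auto simp: eventually_rep_filter\<close>)

lemma rep_filter_nontrivial: "\<not> trivial_limit rep_filter"
  unfolding trivial_limit_def eventually_rep_filter by (auto dest: cls_mem_nonempty)

lemma eventually_eq_if_fcls:
  assumes "g \<in> fcls S I f"
  shows "eventually (\<lambda>x. g x = f x) rep_filter"
proof -
  obtain N where "N \<in> I" and vanish: "\<And>x. x \<notin> N \<Longrightarrow> g x - f x = 0"
    using assms unfolding fcls_def Fideal_def by blast
  then have "cls S I (- N) \<in> B"
    using cls_UNIV_mem ideal_sets by (rule_tac cls_mem_mono) auto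
  then have "eventually (\<lambda>x. x \<in> - N) rep_filter"
    using \<open>N \<in> I\<close> ideal_sets by (subst eventually_mem_rep_filter_iff) auto
  then show ?thesis
    by (rule eventually_mono) (use vanish in simp)
qed

end

locale quotient_quasipoint = quotient_algebra +
  fixes B :: "'a set set set"
  assumes quasipoint: "quasipoint_quot S I B"

sublocale quotient_quasipoint \<subseteq> quotient_dual_ideal
  using quasipoint unfolding quasipoint_def by unfold_locales blast

lemma (in quotient_algebra) quotient_quasipointI: "quasipoint_quot S I B \<Longrightarrow> quotient_quasipoint S I B"
  by unfold_locales

context quotient_quasipoint
begin

lemma cls_Compl_mem_iff:
  assumes "A \<in> S"
  shows "cls S I (- A) \<in> B \<longleftrightarrow> cls S I A \<notin> B"
proof
  assume "cls S I (- A) \<in> B"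
  show "cls S I A \<notin> B"
  proof
    assume "cls S I A \<in> B"
    with \<open>cls S I (- A) \<in> B\<close> have "cls S I (A \<inter> - A) \<in> B"
      using assms by (rule_tac cls_Int_mem) auto
    from cls_mem_nonempty[OF this] show False
      by simp
  qed
next
  assume "cls S I A \<notin> B"
  have "\<exists>D\<in>S. cls S I D \<in> B \<and> D \<inter> A \<in> I"
  proof (rule ccontr)
    assume "\<not> ?thesis"
    then have "dual_ideal (qcarrier S I) (qle I) (qmeet S I) (qbot S I) (adjoin A)"
      using assms by (intro dual_ideal_adjoin) auto
    with subset_adjoin have "adjoin A = B"
      using quasipoint unfolding quasipoint_def by blast
    then show False
      using cls_mem_adjoin[OF assms] \<open>cls S I A \<notin> B\<close> by simp
  qed
  then obtain D where "cls S I D \<in> B" "D \<in> S" "D - - A \<in> I"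
    by (auto simp: Diff_Compl)
  then show "cls S I (- A) \<in> B"
    using assms by (rule_tac cls_mem_mono) auto
qed

lemma spec_fam_quot_mem_mono:
  assumes "\<phi> \<in> Fmeas S" "spec_fam_quot S I \<phi> t \<in> B" "t \<le> s"
  shows "spec_fam_quot S I \<phi> s \<in> B"
  using assms(2) unfolding spec_fam_quot_def
  by (rule cls_mem_subset) (use assms spec_fam_sets in \<open>auto simp: spec_fam_def\<close>)

lemma spec_fam_quot_level_set:
  assumes "\<phi> \<in> Fmeas S"
  shows "{t. spec_fam_quot S I \<phi> t \<in> B} \<noteq> {}" and "bdd_below {t. spec_fam_quot S I \<phi> t \<in> B}"
proof -
  obtain K where K: "\<And>x. \<bar>\<phi> x\<bar> \<le> K"
    using Fmeas_boundE[OF assms] by (metis real_norm_def)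
  then have "spec_fam \<phi> K = UNIV"
    unfolding spec_fam_def by (auto simp: abs_le_iff)
  then show "{t. spec_fam_quot S I \<phi> t \<in> B} \<noteq> {}"
    unfolding spec_fam_quot_def using cls_UNIV_mem by (metis empty_Collect_eq)
  have "- K \<le> t" if "spec_fam_quot S I \<phi> t \<in> B" for t
  proof (rule ccontr)
    assume "\<not> - K \<le> t"
    then have "t < \<phi> x" for x
      using K[of x] unfolding abs_le_iff by linarith
    then have "spec_fam \<phi> t = {}"
      unfolding spec_fam_def by (simp add: not_le[symmetric])
    then show False
      using that cls_mem_nonempty unfolding spec_fam_quot_def by auto
  qed
  then show "bdd_below {t. spec_fam_quot S I \<phi> t \<in> B}"
    by (rule_tac bdd_belowI[of _ "- K"]) auto
qed

lemma obs_fun_less_iff: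
  assumes "\<phi> \<in> Fmeas S"
  shows "obs_fun (spec_fam_quot S I \<phi>) B < a \<longleftrightarrow> (\<exists>t<a. spec_fam_quot S I \<phi> t \<in> B)"
  unfolding obs_fun_def using spec_fam_quot_level_set[OF assms] by (auto simp: cInf_less_iff)

lemma less_obs_fun_iff:
  assumes "\<phi> \<in> Fmeas S"
  shows "a < obs_fun (spec_fam_quot S I \<phi>) B \<longleftrightarrow> (\<exists>t>a. cls S I (- spec_fam \<phi> t) \<in> B)"
proof
  let ?l = "obs_fun (spec_fam_quot S I \<phi>) B"
  assume "a < ?l"
  define t where "t = (a + ?l) / 2"
  have "a < t" "t < ?l"
    using \<open>a < ?l\<close> unfolding t_def by auto
  have "spec_fam_quot S I \<phi> t \<notin> B"
  proof
    assume "spec_fam_quot S I \<phi> t \<in> B"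
    with \<open>t < ?l\<close> have "?l < ?l"
      using obs_fun_less_iff[OF assms, of ?l] by blast
    then show False
      by simp
  qed
  then have "cls S I (- spec_fam \<phi> t) \<in> B"
    unfolding spec_fam_quot_def by (simp add: cls_Compl_mem_iff spec_fam_sets[OF assms])
  with \<open>a < t\<close> show "\<exists>t>a. cls S I (- spec_fam \<phi> t) \<in> B"
    by blast
next
  assume "\<exists>t>a. cls S I (- spec_fam \<phi> t) \<in> B"
  then obtain t where "a < t" and t: "cls S I (- spec_fam \<phi> t) \<in> B"
    by blast
  have "t \<le> s" if "spec_fam_quot S I \<phi> s \<in> B" for s
  proof (rule ccontr)
    assume "\<not> t \<le> s"
    then have "spec_fam_quot S I \<phi> t \<in> B"
      using spec_fam_quot_mem_mono[OF assms that] by simp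
    with t show False
      unfolding spec_fam_quot_def by (simp add: cls_Compl_mem_iff spec_fam_sets[OF assms])
  qed
  then have "t \<le> obs_fun (spec_fam_quot S I \<phi>) B"
    unfolding obs_fun_def using spec_fam_quot_level_set[OF assms] by (simp add: le_cInf_iff)
  with \<open>a < t\<close> show "a < obs_fun (spec_fam_quot S I \<phi>) B"
    by simp
qed

lemma tendsto_obs_fun:
  assumes "\<phi> \<in> Fmeas S"
  shows "(\<phi> \<longlongrightarrow> obs_fun (spec_fam_quot S I \<phi>) B) rep_filter"
proof (rule order_tendstoI)
  fix a
  assume "a < obs_fun (spec_fam_quot S I \<phi>) B"
  then obtain t where "a < t" "cls S I (- spec_fam \<phi> t) \<in> B"
    using less_obs_fun_iff[OF assms] by blast
  then show "eventually (\<lambda>x. a < \<phi> x) rep_filter"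
    unfolding eventually_rep_filter using spec_fam_sets[OF assms]
    by (intro bexI[of _ "- spec_fam \<phi> t"]) (auto simp: spec_fam_def)
next
  fix a
  assume "obs_fun (spec_fam_quot S I \<phi>) B < a"
  then obtain t where "t < a" "cls S I (spec_fam \<phi> t) \<in> B"
    using obs_fun_less_iff[OF assms] unfolding spec_fam_quot_def by blast
  then show "eventually (\<lambda>x. \<phi> x < a) rep_filter"
    unfolding eventually_rep_filter using spec_fam_sets[OF assms]
    by (intro bexI[of _ "spec_fam \<phi> t"]) (auto simp: spec_fam_def)
qed

lemma convergent_rep_filter:
  fixes f :: "'a \<Rightarrow> complex"
  assumes "f \<in> Fmeas S"
  shows "\<exists>c. (f \<longlongrightarrow> c) rep_filter"
  using tendsto_Complex[OF tendsto_obs_fun[OF Fmeas_Re[OF assms]] tendsto_obs_fun[OF Fmeas_Im[OF assms]]]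
  by auto

definition quasipoint_character :: "('a \<Rightarrow> complex) set \<Rightarrow> complex" where
  "quasipoint_character X = Lim rep_filter (SOME f. f \<in> X)"

lemma quasipoint_character_fcls:
  assumes "f \<in> Fmeas S" and "(f \<longlongrightarrow> c) rep_filter"
  shows "quasipoint_character (fcls S I f) = c"
proof -
  have "(SOME g. g \<in> fcls S I f) \<in> fcls S I f"
    using fcls_self[OF assms(1)] by (rule someI[where P = "\<lambda>g. g \<in> fcls S I f"])
  then have "Lim rep_filter (SOME g. g \<in> fcls S I f) = Lim rep_filter f"
    by (intro Lim_cong eventually_eq_if_fcls) simp_all
  then show ?thesis
    unfolding quasipoint_character_def using tendsto_Lim[OF rep_filter_nontrivial assms(2)] by simp
qed

lemma quot_character_quasipoint_character: "quot_character S I quasipoint_character"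
  unfolding quot_character_def
proof (intro conjI ballI allI)
  fix f g :: "'a \<Rightarrow> complex"
  assume f: "f \<in> Fmeas S" and g: "g \<in> Fmeas S"
  obtain c d where c: "(f \<longlongrightarrow> c) rep_filter" and d: "(g \<longlongrightarrow> d) rep_filter"
    using convergent_rep_filter f g by blast
  show "quasipoint_character (fcls S I (\<lambda>x. f x + g x))
      = quasipoint_character (fcls S I f) + quasipoint_character (fcls S I g)"
    using quasipoint_character_fcls[OF Fmeas_add[OF f g] tendsto_add[OF c d]]
    by (simp add: quasipoint_character_fcls[OF f c] quasipoint_character_fcls[OF g d])
  show "quasipoint_character (fcls S I (\<lambda>x. f x * g x))
      = quasipoint_character (fcls S I f) * quasipoint_character (fcls S I g)"
    using quasipoint_character_fcls[OF Fmeas_mult[OF f g] tendsto_mult[OF c d]]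
    by (simp add: quasipoint_character_fcls[OF f c] quasipoint_character_fcls[OF g d])
next
  fix f :: "'a \<Rightarrow> complex" and a :: complex
  assume f: "f \<in> Fmeas S"
  obtain c where c: "(f \<longlongrightarrow> c) rep_filter"
    using convergent_rep_filter f by blast
  show "quasipoint_character (fcls S I (\<lambda>x. a * f x)) = a * quasipoint_character (fcls S I f)"
    using quasipoint_character_fcls[OF Fmeas_mult[OF Fmeas_const f] tendsto_mult[OF tendsto_const c]]
    by (simp add: quasipoint_character_fcls[OF f c])
next
  show "\<exists>f\<in>Fmeas S. quasipoint_character (fcls S I f) \<noteq> 0"
    using quasipoint_character_fcls[OF Fmeas_const tendsto_const, of 1] Fmeas_const
    by (intro bexI[of _ "\<lambda>x. 1"]) auto
qed

lemma quasipoint_character_indicator: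
  assumes "A \<in> S"
  shows "quasipoint_character (fcls S I (\<lambda>x. of_real (indicator A x)))
    = (if cls S I A \<in> B then 1 else 0)"
proof (cases "cls S I A \<in> B")
  case True
  then have "eventually (\<lambda>x. complex_of_real (indicator A x) = 1) rep_filter"
    using assms by (auto simp: eventually_mem_rep_filter_iff[symmetric] elim: eventually_mono)
  then show ?thesis
    using True by (simp add: quasipoint_character_fcls[OF Fmeas_indicator[OF assms]] tendsto_eventually)
next
  case False
  then have "eventually (\<lambda>x. x \<in> - A) rep_filter"
    using assms by (subst eventually_mem_rep_filter_iff) (auto simp: cls_Compl_mem_iff)
  then have "eventually (\<lambda>x. complex_of_real (indicator A x) = 0) rep_filter"
    by (rule eventually_mono) simp
  then show ?thesis
    using False by (simp add: quasipoint_character_fcls[OF Fmeas_indicator[OF assms]] tendsto_eventually)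
qed

lemma quot_character_eq_obs_fun:
  assumes ch: "quot_character S I ch"
    and ch_indicator: "\<And>A. A \<in> S \<Longrightarrow>
      ch (fcls S I (\<lambda>x. of_real (indicator A x))) = (if cls S I A \<in> B then 1 else 0)"
    and \<phi>: "\<phi> \<in> Fmeas S"
  shows "ch (fcls S I (\<lambda>x. complex_of_real (\<phi> x))) = complex_of_real (obs_fun (spec_fam_quot S I \<phi>) B)"
proof (rule ccontr)
  define l where "l = obs_fun (spec_fam_quot S I \<phi>) B"
  define c where "c = ch (fcls S I (\<lambda>x. complex_of_real (\<phi> x)))"
  assume "\<not> ?thesis"
  then have "c \<noteq> of_real l"
    unfolding c_def l_def .
  define e where "e = norm (c - of_real l) / 2"
  have "e > 0"
    using \<open>c \<noteq> of_real l\<close> unfolding e_def by simp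
  then have "eventually (\<lambda>x. dist (\<phi> x) l < e) rep_filter"
    using tendsto_obs_fun[OF \<phi>] unfolding l_def by (rule tendstoD[rotated])
  then obtain A where A: "A \<in> S" "cls S I A \<in> B" and near_l: "\<And>x. x \<in> A \<Longrightarrow> \<bar>\<phi> x - l\<bar> < e"
    unfolding eventually_rep_filter dist_real_def by blast
  define u where "u = (\<lambda>x. complex_of_real (\<phi> x) + - c)"
  have ch_const: "ch (fcls S I (\<lambda>x. - c)) = - c"
    using quot_character_scale[OF ch Fmeas_const, of "- c" 1] quot_character_one[OF ch] by simp
  have u: "u \<in> Fmeas S" "ch (fcls S I u) = 0"
    unfolding u_def
    using Fmeas_add[OF Fmeas_of_real[OF \<phi>] Fmeas_const[of "- c"]]
      quot_character_add[OF ch Fmeas_of_real[OF \<phi>] Fmeas_const[of "- c"]] ch_const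
    by (simp_all add: c_def)
  have A_indicator: "ch (fcls S I (\<lambda>x. of_real (indicator A x))) = 1"
    and Compl_indicator: "ch (fcls S I (\<lambda>x. of_real (indicator (- A) x))) = 0"
    using ch_indicator[OF A(1)] ch_indicator[OF Compl_sets[OF A(1)]] A(2) cls_Compl_mem_iff[OF A(1)]
    by simp_all
  txt \<open>On A, \<open>\<phi>\<close> stays within e of l while c is 2e away from l, so h is bounded away from 0.\<close>
  define h where "h = (\<lambda>x. u x * of_real (indicator A x) + of_real (indicator (- A) x))"
  have h: "h \<in> Fmeas S"
    unfolding h_def using u(1) A(1) by (intro Fmeas_add Fmeas_mult Fmeas_indicator Compl_sets)
  have "ch (fcls S I h) = ch (fcls S I u) * 1 + 0"
    unfolding h_def A_indicator[symmetric] Compl_indicator[symmetric]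
    using quot_character_add[OF ch Fmeas_mult[OF u(1) Fmeas_indicator[OF A(1)]]
        Fmeas_indicator[OF Compl_sets[OF A(1)]]]
      quot_character_mult[OF ch u(1) Fmeas_indicator[OF A(1)]]
    by simp
  then have "ch (fcls S I h) = 0"
    using u(2) by simp
  have "min e 1 \<le> norm (h x)" for x
  proof (cases "x \<in> A")
    case True
    have "2 * e \<le> norm (of_real (\<phi> x) - c) + norm (of_real (\<phi> x) - of_real l :: complex)"
      unfolding e_def using norm_triangle_ineq4[of "of_real (\<phi> x) - c" "of_real (\<phi> x) - of_real l"]
      by (simp add: norm_minus_commute)
    moreover have "norm (of_real (\<phi> x) - of_real l :: complex) < e"
      using near_l[OF True] by (metis norm_of_real of_real_diff)
    ultimately show ?thesis
      using True by (simp add: h_def u_def)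
  qed (simp add: h_def)
  then show False
    using quot_character_nonzero[OF ch h, of "min e 1"] \<open>ch (fcls S I h) = 0\<close> \<open>e > 0\<close> by simp
qed


end

context quotient_algebra
begin

lemma topspace_stone_quot: "topspace (stone_quot S I) = {B. quasipoint_quot S I B}"
proof -
  have "\<exists>X\<in>qcarrier S I. X \<in> B" if "quasipoint_quot S I B" for B
  proof -
    interpret quotient_quasipoint S I B
      using that by (rule quotient_quasipointI)
    have "cls S I UNIV \<in> qcarrier S I"
      unfolding mem_qcarrier_iff by blast
    then show ?thesis
      using cls_UNIV_mem by blast
  qed
  then show ?thesis
    unfolding stone_spectrum_def topology_generated_by_topspace by blast
qed

lemma openin_stone_quot:
  "X \<in> qcarrier S I \<Longrightarrow> openin (stone_quot S I) {B. quasipoint_quot S I B \<and> X \<in> B}"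
  unfolding stone_spectrum_def by (rule topology_generated_by_Basis) blast

lemma continuous_map_obs_fun:
  assumes "\<phi> \<in> Fmeas S"
  shows "continuous_map (stone_quot S I) euclideanreal (obs_fun (spec_fam_quot S I \<phi>))"
  unfolding continuous_map_upper_lower_semicontinuous_lt
proof (intro conjI allI)
  fix a
  let ?above = "\<Union>t\<in>{a<..}. {B. quasipoint_quot S I B \<and> cls S I (- spec_fam \<phi> t) \<in> B}"
  let ?below = "\<Union>t\<in>{..<a}. {B. quasipoint_quot S I B \<and> spec_fam_quot S I \<phi> t \<in> B}"
  have "cls S I (- spec_fam \<phi> t) \<in> qcarrier S I" "spec_fam_quot S I \<phi> t \<in> qcarrier S I" for t
    unfolding qcarrier_def spec_fam_quot_def by (intro imageI Compl_sets spec_fam_sets[OF assms])+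
  then have "openin (stone_quot S I) ?above" "openin (stone_quot S I) ?below"
    by (auto intro!: openin_Union intro: openin_stone_quot)
  moreover have "{B \<in> topspace (stone_quot S I). a < obs_fun (spec_fam_quot S I \<phi>) B} = ?above"
    "{B \<in> topspace (stone_quot S I). obs_fun (spec_fam_quot S I \<phi>) B < a} = ?below"
    using quotient_quasipoint.less_obs_fun_iff[OF quotient_quasipointI assms]
      quotient_quasipoint.obs_fun_less_iff[OF quotient_quasipointI assms]
    by (auto simp: topspace_stone_quot)
  ultimately show "openin (stone_quot S I)
      {B \<in> topspace (stone_quot S I). a < obs_fun (spec_fam_quot S I \<phi>) B}"
    "openin (stone_quot S I) {B \<in> topspace (stone_quot S I). obs_fun (spec_fam_quot S I \<phi>) B < a}"
    by simp_all
qed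

lemma cls_mem_image_iff:
  assumes B: "dual_ideal S (\<subseteq>) (\<inter>) {} B" and null_compl: "\<forall>N\<in>I. UNIV - N \<in> B"
    and "A \<in> S"
  shows "cls S I A \<in> cls S I ` B \<longleftrightarrow> A \<in> B"
proof
  assume "cls S I A \<in> cls S I ` B"
  then obtain C where "C \<in> B" "cls S I A = cls S I C"
    by blast
  moreover have "C \<in> S"
    using B \<open>C \<in> B\<close> unfolding dual_ideal_def by blast
  ultimately have "UNIV - sym_diff A C \<in> B"
    using null_compl \<open>A \<in> S\<close> cls_eq_iff by blast
  with \<open>C \<in> B\<close> have "C \<inter> (UNIV - sym_diff A C) \<in> B"
    using B unfolding dual_ideal_def by blast
  moreover have "C \<inter> (UNIV - sym_diff A C) \<subseteq> A"
    by blast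
  ultimately show "A \<in> B"
    using B \<open>A \<in> S\<close> unfolding dual_ideal_def by blast
qed blast

lemma obs_fun_cls_image:
  assumes "dual_ideal S (\<subseteq>) (\<inter>) {} B" and "\<forall>N\<in>I. UNIV - N \<in> B" and "\<phi> \<in> Fmeas S"
  shows "obs_fun (spec_fam_quot S I \<phi>) (cls S I ` B) = obs_fun (spec_fam \<phi>) B"
  unfolding obs_fun_def spec_fam_quot_def
  using cls_mem_image_iff[OF assms(1,2) spec_fam_sets[OF assms(3)]] by simp

end

theorem theorem2p14:
  fixes S I :: "'a set set"
  assumes "sigma_algebra (UNIV::'a set) S"
      and "sigma_ideal S I"
  shows
    "(\<forall>\<phi>::'a \<Rightarrow> real. \<phi> \<in> Fmeas S \<longrightarrow>
        continuous_map (stone_quot S I) euclideanreal (obs_fun (spec_fam_quot S I \<phi>)))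
   \<and> (\<forall>B. quasipoint_quot S I B \<longrightarrow>
        (\<exists>ch. quot_character S I ch \<and>
              (\<forall>A\<in>S. ch (fcls S I (\<lambda>x. of_real (indicator A x)))
                        = (if cls S I A \<in> B then 1 else 0))) \<and>
        (\<forall>ch. quot_character S I ch \<and>
              (\<forall>A\<in>S. ch (fcls S I (\<lambda>x. of_real (indicator A x)))
                        = (if cls S I A \<in> B then 1 else 0)) \<longrightarrow>
           (\<forall>\<phi>::'a \<Rightarrow> real. \<phi> \<in> Fmeas S \<longrightarrow>
              ch (fcls S I (\<lambda>x. complex_of_real (\<phi> x)))
                = complex_of_real (obs_fun (spec_fam_quot S I \<phi>) B))))
   \<and> (\<forall>B. quasipoint_set S B \<and> (\<forall>A\<in>I. UNIV - A \<in> B) \<longrightarrow>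
        (\<forall>\<phi>::'a \<Rightarrow> real. \<phi> \<in> Fmeas S \<longrightarrow>
           obs_fun (spec_fam_quot S I \<phi>) (cls S I ` B) = obs_fun (spec_fam \<phi>) B))"
proof -
  interpret quotient_algebra S I
    using assms by (rule quotient_algebra_if_sigma_ideal)
  show ?thesis
  proof (intro conjI allI impI)
    show "continuous_map (stone_quot S I) euclideanreal (obs_fun (spec_fam_quot S I \<phi>))"
      if "\<phi> \<in> Fmeas S" for \<phi> :: "'a \<Rightarrow> real"
      using that by (rule continuous_map_obs_fun)
    show "obs_fun (spec_fam_quot S I \<phi>) (cls S I ` B) = obs_fun (spec_fam \<phi>) B"
      if "quasipoint_set S B \<and> (\<forall>A\<in>I. UNIV - A \<in> B)" and "\<phi> \<in> Fmeas S"
      for B and \<phi> :: "'a \<Rightarrow> real"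
      using that unfolding quasipoint_def by (intro obs_fun_cls_image) auto
  qed (use quotient_quasipoint.quot_character_quasipoint_character[OF quotient_quasipointI]
      quotient_quasipoint.quasipoint_character_indicator[OF quotient_quasipointI]
      quotient_quasipoint.quot_character_eq_obs_fun[OF quotient_quasipointI] in blast)+
qed

end
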